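(* Let $\delta\ge 2$ and $n\ge 8\delta$ be integers. Then $\lambda_1\big(D(K_\delta\vee(K_{n-2\delta}+\delta K_1))\big)>n+\delta$, and for every integer $s$ with $\delta+1\le s\le \frac{n-1}{2}$, $$\lambda_1\big(D(K_\delta\vee(K_{n-2\delta}+\delta K_1))\big)<\lambda_1\big(D(K_s\vee(K_{n-2s}+sK_1))\big).$$
   Context: For a connected graph $G$, $D(G)$ is the distance matrix and $\lambda_1(D(G))$ its largest eigenvalue. $K_m$ is the complete graph, $+$ is disjoint union, $sK_1$ is $s$ isolated vertices, $\vee$ is the join (disjoint union plus all edges between the two parts). *)

theory Defs
  imports "Jordan_Normal_Form.Char_Poly"
begin

text \<open>Simple graphs on vertex set {0..<n}, given by an adjacency predicate.\<close>

definition walk_rel :: "nat \<Rightarrow> (nat \<Rightarrow> nat \<Rightarrow> bool) \<Rightarrow> (nat \<times> nat) set" where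
  "walk_rel n adj = {(u,v). u < n \<and> v < n \<and> adj u v}"

definition graph_dist :: "nat \<Rightarrow> (nat \<Rightarrow> nat \<Rightarrow> bool) \<Rightarrow> nat \<Rightarrow> nat \<Rightarrow> nat" where
  "graph_dist n adj u v = (LEAST k. (u, v) \<in> (walk_rel n adj) ^^ k)"

definition connected_graph :: "nat \<Rightarrow> (nat \<Rightarrow> nat \<Rightarrow> bool) \<Rightarrow> bool" where
  "connected_graph n adj = (\<forall>u<n. \<forall>v<n. \<exists>k. (u, v) \<in> (walk_rel n adj) ^^ k)"

definition dist_matrix :: "nat \<Rightarrow> (nat \<Rightarrow> nat \<Rightarrow> bool) \<Rightarrow> real mat" where
  "dist_matrix n adj = mat n n (\<lambda>(i,j). real (graph_dist n adj i j))"

definition lambda1 :: "real mat \<Rightarrow> real" where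
  "lambda1 A = Max {x. eigenvalue A x}"

text \<open>The graph K_s \<or> (K_{n-2s} + s K_1) on {0..<n}:
  {0..<s} is K_s, {s..<n-s} is K_{n-2s}, {n-s..<n} are the s isolated vertices.\<close>
definition join_graph :: "nat \<Rightarrow> nat \<Rightarrow> nat \<Rightarrow> nat \<Rightarrow> bool" where
  "join_graph n s u v = (u \<noteq> v \<and> u < n \<and> v < n \<and>
     (u < s \<or> v < s \<or> (s \<le> u \<and> u < n - s \<and> s \<le> v \<and> v < n - s)))"

end

theory Submission
  imports Defs
begin

text \<open>Vertex \<open>0\<close> of the clique \<open>K\<^sub>s\<close> is adjacent to every other vertex, so all distances are
  \<open>0\<close>, \<open>1\<close> or \<open>2\<close>, and the partition into \<open>K\<^sub>s\<close>, \<open>K\<^sub>n\<^sub>-\<^sub>2\<^sub>s\<close> and \<open>s K\<^sub>1\<close> is equitable for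
  the distance matrix. A root \<open>x \<ge> n\<close> of the characteristic cubic \<open>\<phi>\<^sub>s\<close> of the \<open>3 \<times> 3\<close>
  quotient matrix therefore lifts to an eigenvector with positive entries, and by the
  Collatz--Wielandt bound it is \<open>\<lambda>\<^sub>1\<close>; such a root exists whenever \<open>\<phi>\<^sub>s\<close> is negative at some
  point \<open>\<ge> n\<close>, since \<open>\<phi>\<^sub>s > 0\<close> from \<open>2n\<close> on. Now \<open>\<phi>\<^sub>\<delta>(n + \<delta>) < 0\<close>, and for \<open>s > \<delta>\<close> one has
  \<open>\<phi>\<^sub>s < \<phi>\<^sub>\<delta>\<close> on \<open>[n + \<delta>, \<infinity>)\<close>, so \<open>\<phi>\<^sub>s\<close> is negative at the root \<open>\<lambda>\<^sub>1\<close> of \<open>\<phi>\<^sub>\<delta>\<close>.\<close>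

lemma walk_rel_iff: "(u, v) \<in> walk_rel n adj \<longleftrightarrow> u < n \<and> v < n \<and> adj u v"
  by (simp add: walk_rel_def)

lemma graph_dist_self: "graph_dist n adj u u = 0"
  unfolding graph_dist_def by (intro Least_eq_0) simp

lemma graph_dist_adjacent:
  assumes "u \<noteq> v" "u < n" "v < n" "adj u v"
  shows "graph_dist n adj u v = 1"
  unfolding graph_dist_def
proof (rule Least_equality)
  show "(u, v) \<in> walk_rel n adj ^^ 1" using assms by (simp add: walk_rel_iff)
  show "1 \<le> k" if "(u, v) \<in> walk_rel n adj ^^ k" for k
    using that assms(1) by (cases k) auto
qed

lemma graph_dist_common_neighbour:
  assumes "u \<noteq> v" "\<not> adj u v" "w < n" "u < n" "v < n" "adj u w" "adj w v"
  shows "graph_dist n adj u v = 2"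
  unfolding graph_dist_def
proof (rule Least_equality)
  show "(u, v) \<in> walk_rel n adj ^^ 2"
    using assms by (auto simp: numeral_2_eq_2 walk_rel_iff intro: relpow_Suc_I)
  show "2 \<le> k" if "(u, v) \<in> walk_rel n adj ^^ k" for k
  proof (rule ccontr)
    assume "\<not> 2 \<le> k"
    then have "k = 0 \<or> k = 1" by auto
    then show False using that assms(1,2) by (auto simp: walk_rel_iff)
  qed
qed

lemma graph_dist_join_graph:
  assumes "0 < s" "i < n" "j < n"
  shows "graph_dist n (join_graph n s) i j =
    (if i = j then 0 else if join_graph n s i j then 1 else 2)"
proof -
  have "graph_dist n (join_graph n s) i j = 2" if "i \<noteq> j" "\<not> join_graph n s i j"
  proof (rule graph_dist_common_neighbour[of _ _ _ 0])
    show "join_graph n s i 0" "join_graph n s 0 j"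
      using that assms unfolding join_graph_def by auto
  qed (use that assms in auto)
  then show ?thesis using assms by (simp add: graph_dist_self graph_dist_adjacent)
qed

lemma sum_punctured_const:
  fixes c :: real
  assumes "finite A"
  shows "(\<Sum>j\<in>A. if j = i then 0 else c) = (real (card A) - of_bool (i \<in> A)) * c"
proof -
  have "(\<Sum>j\<in>A. if j = i then 0 else c) = (\<Sum>j\<in>A. c) - (\<Sum>j\<in>A. if j = i then c else 0)"
    by (subst sum_subtractf[symmetric]) (rule sum.cong, auto)
  then show ?thesis using assms by (cases "i \<in> A") (simp_all add: algebra_simps)
qed

definition block_vec :: "nat \<Rightarrow> nat \<Rightarrow> real \<Rightarrow> real \<Rightarrow> real \<Rightarrow> real vec" where
  "block_vec n s a b c = vec n (\<lambda>j. if j < s then a else if j < n - s then b else c)"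

lemma block_vec_carrier [simp]: "block_vec n s a b c \<in> carrier_vec n"
  by (simp add: block_vec_def)

lemma dist_matrix_join_graph_mult_block_vec:
  assumes "0 < s" "2 * s \<le> n"
  defines "q \<equiv> real n - 2 * real s"
  shows "dist_matrix n (join_graph n s) *\<^sub>v block_vec n s a b c =
    block_vec n s ((real s - 1) * a + q * b + real s * c)
                  (real s * a + (q - 1) * b + 2 * real s * c)
                  (real s * a + 2 * q * b + 2 * (real s - 1) * c)" (is "_ = ?rhs")
proof (rule eq_vecI)
  fix i assume "i < dim_vec ?rhs"
  then have i: "i < n" by (simp add: block_vec_def)
  define \<beta> where "\<beta> = (if i < n - s then 1 else 2 :: real)"
  define \<gamma> where "\<gamma> = (if i < s then 1 else 2 :: real)"
  let ?t = "\<lambda>c j. if j = i then 0 else c :: real"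
  have entry: "real (graph_dist n (join_graph n s) i j) * block_vec n s a b c $ j =
      (if j < s then ?t a j else if j < n - s then ?t (\<beta> * b) j else ?t (\<gamma> * c) j)"
    if "j < n" for j
  proof -
    have "real (graph_dist n (join_graph n s) i j) =
        (if j = i then 0 else if j < s \<or> i < s \<or> (j < n - s \<and> i < n - s) then 1 else 2)"
    proof -
      have "join_graph n s i j \<longleftrightarrow> i \<noteq> j \<and> (j < s \<or> i < s \<or> (j < n - s \<and> i < n - s))"
        using that i unfolding join_graph_def by linarith
      then show ?thesis using graph_dist_join_graph[OF assms(1) i that] by auto
    qed
    then show ?thesis
      unfolding block_vec_def \<beta>_def \<gamma>_def using that by auto
  qed
  have "(dist_matrix n (join_graph n s) *\<^sub>v block_vec n s a b c) $ i =
      (\<Sum>j\<in>{0..<n}. real (graph_dist n (join_graph n s) i j) * block_vec n s a b c $ j)"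
    using i by (simp add: dist_matrix_def scalar_prod_def block_vec_def)
  also have "\<dots> = (\<Sum>j\<in>{0..<s}. ?t a j) + (\<Sum>j\<in>{s..<n-s}. ?t (\<beta> * b) j) + (\<Sum>j\<in>{n-s..<n}. ?t (\<gamma> * c) j)"
  proof -
    let ?g = "\<lambda>j. real (graph_dist n (join_graph n s) i j) * block_vec n s a b c $ j"
    have "sum ?g {0..<n} = sum ?g {0..<s} + sum ?g {s..<n-s} + sum ?g {n-s..<n}"
      using assms(2) by (simp add: sum.atLeastLessThan_concat)
    moreover have "sum ?g {0..<s} = (\<Sum>j\<in>{0..<s}. ?t a j)"
      by (intro sum.cong refl) (subst entry, use assms(2) in auto)
    moreover have "sum ?g {s..<n-s} = (\<Sum>j\<in>{s..<n-s}. ?t (\<beta> * b) j)"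
      by (intro sum.cong refl) (subst entry, use assms(2) in auto)
    moreover have "sum ?g {n-s..<n} = (\<Sum>j\<in>{n-s..<n}. ?t (\<gamma> * c) j)"
      by (intro sum.cong refl) (subst entry, use assms(2) in auto)
    ultimately show ?thesis by simp
  qed
  also have "\<dots> = (real s - of_bool (i < s)) * a + (q - of_bool (s \<le> i \<and> i < n - s)) * (\<beta> * b)
      + (real s - of_bool (n - s \<le> i)) * (\<gamma> * c)"
    using assms(2) i by (simp add: sum_punctured_const q_def of_nat_diff)
  also have "\<dots> = ?rhs $ i"
  proof -
    consider "i < s" | "s \<le> i" "i < n - s" | "n - s \<le> i" by linarith
    then show ?thesis
      by cases (use i assms(1,2) in \<open>auto simp: block_vec_def \<beta>_def \<gamma>_def algebra_simps\<close>)
  qed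
  finally show "(dist_matrix n (join_graph n s) *\<^sub>v block_vec n s a b c) $ i = \<dots>" .
qed (simp add: block_vec_def dist_matrix_def)

lemma smult_block_vec: "x \<cdot>\<^sub>v block_vec n s a b c = block_vec n s (x * a) (x * b) (x * c)"
  by (rule eq_vecI) (auto simp: block_vec_def)

text \<open>The characteristic polynomial \<open>det (x I - Q)\<close> of the quotient matrix
  \<open>Q = [[s - 1, q, s], [s, q - 1, 2 s], [s, 2 q, 2 (s - 1)]]\<close>, where \<open>q = n - 2 s\<close>.\<close>
definition join_cubic :: "real \<Rightarrow> real \<Rightarrow> real \<Rightarrow> real" where
  "join_cubic n s x = x^3 - (n + s - 4) * x^2 + (-2*n*s - 3*n + 5*s^2 - s + 5) * x
     + n*s^2 - 2*n*s - 2*n - 2*s^3 + 5*s^2 + 2"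

text \<open>The block values form the cross product of the first two rows of \<open>x I - Q\<close>, so they
  satisfy the first two equations of \<open>Q e = x e\<close> for every \<open>x\<close>, and the third one exactly at
  the roots of the cubic.\<close>
definition join_evec :: "nat \<Rightarrow> nat \<Rightarrow> real \<Rightarrow> real vec" where
  "join_evec n s x = (let q = real n - 2 * real s in
     block_vec n s (real s * (x + q + 1)) (real s * (2 * x - real s + 2))
       ((x - real s + 1) * (x - q + 1) - q * real s))"

lemma dist_matrix_join_graph_mult_join_evec:
  assumes "0 < s" "2 * s \<le> n" "join_cubic (real n) (real s) x = 0"
  shows "dist_matrix n (join_graph n s) *\<^sub>v join_evec n s x = x \<cdot>\<^sub>v join_evec n s x"
proof -
  define q where "q = real n - 2 * real s"
  define a where "a = real s * (x + q + 1)"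
  define b where "b = real s * (2 * x - real s + 2)"
  define c where "c = (x - real s + 1) * (x - q + 1) - q * real s"
  have "(real s - 1) * a + q * b + real s * c = x * a"
    "real s * a + (q - 1) * b + 2 * real s * c = x * b"
    "real s * a + 2 * q * b + 2 * (real s - 1) * c = x * c - join_cubic (real n) (real s) x"
    unfolding a_def b_def c_def q_def join_cubic_def
    by (simp_all add: algebra_simps power2_eq_square power3_eq_cube)
  then show ?thesis
    using assms unfolding join_evec_def Let_def q_def[symmetric] a_def[symmetric] b_def[symmetric]
      c_def[symmetric]
    by (simp add: dist_matrix_join_graph_mult_block_vec q_def smult_block_vec)
qed

lemma join_evec_pos:
  assumes "0 < s" "2 * s + 1 \<le> n" "real n \<le> x" "j < n"
  shows "join_evec n s x $ j > 0"
proof -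
  define q where "q = real n - 2 * real s"
  have q: "1 \<le> q" using assms(2) unfolding q_def by linarith
  have "q * real s < (x - real s + 1) * (x - q + 1)"
    using q assms(1,3) unfolding q_def by (intro mult_strict_mono) auto
  moreover have "0 < real s * (x + q + 1)" "0 < real s * (2 * x - real s + 2)"
    using q assms(1-3) by auto
  ultimately show ?thesis
    using assms(4) by (simp add: join_evec_def block_vec_def q_def[symmetric])
qed

text \<open>Collatz--Wielandt bound: at a coordinate \<open>i\<close> maximising \<open>c = \<bar>v i\<bar> / w i\<close>, the eigen-equations
  give \<open>\<bar>l\<bar> \<bar>v i\<bar> \<le> (A \<bar>v\<bar>) i \<le> c (A w) i = r \<bar>v i\<bar>\<close>.\<close>
lemma eigenvalue_le_of_positive_eigenvector:
  fixes A :: "real mat"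
  assumes A: "A \<in> carrier_mat n n" and nonneg: "\<And>i j. i < n \<Longrightarrow> j < n \<Longrightarrow> 0 \<le> A $$ (i, j)"
    and w: "w \<in> carrier_vec n" and w_pos: "\<And>i. i < n \<Longrightarrow> 0 < w $ i"
    and Aw: "A *\<^sub>v w = r \<cdot>\<^sub>v w" and l: "eigenvalue A l"
  shows "l \<le> r"
proof -
  obtain v where v: "v \<in> carrier_vec n" "v \<noteq> 0\<^sub>v n" "A *\<^sub>v v = l \<cdot>\<^sub>v v"
    using l A unfolding eigenvalue_def eigenvector_def by auto
  obtain k where k: "k < n" "v $ k \<noteq> 0"
    using v(1,2) by (metis carrier_vecD eq_vecI index_zero_vec)
  let ?q = "\<lambda>j. \<bar>v $ j\<bar> / w $ j"
  define c where "c = Max (?q ` {0..<n})"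
  have q_le: "?q j \<le> c" if "j < n" for j
    unfolding c_def using that by (intro Max_ge) auto
  obtain i where i: "i < n" "?q i = c"
    using Max_in[of "?q ` {0..<n}"] k(1) unfolding c_def by fastforce
  have c_pos: "0 < c" using q_le[OF k(1)] k w_pos[OF k(1)] by (smt (verit) divide_pos_pos)
  have v_le: "\<bar>v $ j\<bar> \<le> c * w $ j" if "j < n" for j
    using q_le[OF that] w_pos[OF that] by (simp add: divide_le_eq)
  have v_i: "\<bar>v $ i\<bar> = c * w $ i" using i w_pos[OF i(1)] by (simp add: divide_eq_eq)
  have "\<bar>l\<bar> * \<bar>v $ i\<bar> = \<bar>\<Sum>j\<in>{0..<n}. A $$ (i, j) * v $ j\<bar>"
    using arg_cong[OF v(3), of "\<lambda>u. u $ i"] i(1) v(1) A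
    by (simp add: abs_mult scalar_prod_def)
  also have "\<dots> \<le> (\<Sum>j\<in>{0..<n}. \<bar>A $$ (i, j) * v $ j\<bar>)" by (rule sum_abs)
  also have "\<dots> \<le> (\<Sum>j\<in>{0..<n}. A $$ (i, j) * (c * w $ j))"
    using nonneg[OF i(1)] v_le by (intro sum_mono) (simp add: abs_mult mult_left_mono)
  also have "\<dots> = c * (A *\<^sub>v w) $ i"
    using A w i(1) by (simp add: scalar_prod_def sum_distrib_left algebra_simps)
  also have "\<dots> = r * \<bar>v $ i\<bar>"
    using Aw w i(1) v_i by simp
  finally have "\<bar>l\<bar> * (c * w $ i) \<le> r * (c * w $ i)" unfolding v_i .
  then have "\<bar>l\<bar> \<le> r" using c_pos w_pos[OF i(1)] by (simp add: mult_le_cancel_right)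
  then show ?thesis by simp
qed

lemma finite_eigenvalues:
  fixes A :: "real mat"
  assumes "A \<in> carrier_mat n n"
  shows "finite {x. eigenvalue A x}"
proof -
  have "char_poly A \<noteq> 0" using degree_monic_char_poly[OF assms] by auto
  then show ?thesis using poly_roots_finite eigenvalue_root_char_poly[OF assms] by simp
qed

lemma lambda1_eq_of_positive_eigenvector:
  fixes A :: "real mat"
  assumes A: "A \<in> carrier_mat n n" and nonneg: "\<And>i j. i < n \<Longrightarrow> j < n \<Longrightarrow> 0 \<le> A $$ (i, j)"
    and w: "w \<in> carrier_vec n" and w_pos: "\<And>i. i < n \<Longrightarrow> 0 < w $ i" and "0 < n"
    and Aw: "A *\<^sub>v w = r \<cdot>\<^sub>v w"
  shows "lambda1 A = r"
proof -
  have "w \<noteq> 0\<^sub>v n" using w_pos \<open>0 < n\<close> by fastforce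
  then have "eigenvalue A r" unfolding eigenvalue_def eigenvector_def using A w Aw by auto
  then show ?thesis unfolding lambda1_def
    using eigenvalue_le_of_positive_eigenvector[OF A nonneg w w_pos Aw]
    by (intro Max_eqI finite_eigenvalues[OF A]) auto
qed

lemma lambda1_join_graph:
  assumes "0 < s" "2 * s + 1 \<le> n" "join_cubic (real n) (real s) x = 0" "real n \<le> x"
  shows "lambda1 (dist_matrix n (join_graph n s)) = x"
  using assms
  by (intro lambda1_eq_of_positive_eigenvector[of _ n "join_evec n s x"]
      dist_matrix_join_graph_mult_join_evec join_evec_pos)
     (auto simp: dist_matrix_def join_evec_def Let_def)

text \<open>Each estimate substitutes nonnegative slack variables for the hypotheses, after which
  the value is a polynomial with coefficients of a single sign.\<close>
lemma join_cubic_at_n_plus_s_neg: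
  fixes n s :: real
  assumes "2 \<le> s" "8 * s \<le> n"
  shows "join_cubic n s (n + s) < 0"
proof -
  define a where "a = n - 8 * s"
  define b where "b = s - 2"
  have "a \<ge> 0" "b \<ge> 0" using assms by (auto simp: a_def b_def)
  then have "0 \<le> 2*a^2*b + 3*a^2 + 28*a*b^2 + 94*a*b + 73*a + 93*b^3 + 470*b^2 + 735*b"
    by (intro add_nonneg_nonneg mult_nonneg_nonneg) auto
  moreover have "join_cubic n s (n + s) =
    -(2*a^2*b + 3*a^2 + 28*a*b^2 + 94*a*b + 73*a + 93*b^3 + 470*b^2 + 735*b + 332)"
    unfolding join_cubic_def a_def b_def by (simp add: algebra_simps power2_eq_square power3_eq_cube)
  ultimately show ?thesis by linarith
qed

lemma join_cubic_pos_from_2n: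
  fixes n s x :: real
  assumes "1 \<le> s" "2 * s + 1 \<le> n" "2 * n \<le> x"
  shows "0 < join_cubic n s x"
proof -
  define b where "b = s - 1"
  define c where "c = n - 2 * s - 1"
  define y where "y = x - 2 * n"
  have "b \<ge> 0" "c \<ge> 0" "y \<ge> 0" using assms by (auto simp: b_def c_def y_def)
  then have "0 \<le> 102*y + 18*y^2 + y^3 + 135*c + 55*c*y + 5*c*y^2 + 38*c^2 + 8*c^2*y + 4*c^3
      + 256*b + 101*b*y + 9*b*y^2 + 122*b*c + 26*b*c*y + 16*b*c^2 + 124*b^2 + 25*b^2*y
      + 27*b^2*c + 20*b^3"
    by (intro add_nonneg_nonneg mult_nonneg_nonneg) auto
  moreover have "join_cubic n s x = 176 + 102*y + 18*y^2 + y^3 + 135*c + 55*c*y + 5*c*y^2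
      + 38*c^2 + 8*c^2*y + 4*c^3 + 256*b + 101*b*y + 9*b*y^2 + 122*b*c + 26*b*c*y + 16*b*c^2
      + 124*b^2 + 25*b^2*y + 27*b^2*c + 20*b^3"
    unfolding join_cubic_def b_def c_def y_def
    by (simp add: algebra_simps power2_eq_square power3_eq_cube)
  ultimately show ?thesis by linarith
qed

lemma join_cubic_strict_antimono:
  fixes n d s x :: real
  assumes "0 \<le> d" "d < s" "8 * d \<le> n" "2 * s + 1 \<le> n" "n + d \<le> x"
  shows "join_cubic n s x < join_cubic n d x"
proof -
  define h where "h y = - (y^2) - (2*n + 1) * y + 5*(s + d) * y + n*(s + d) - 2*n
    - 2*(s^2 + s*d + d^2) + 5*(s + d)" for y
  have diff: "join_cubic n s x - join_cubic n d x = (s - d) * h x"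
    unfolding join_cubic_def h_def by (simp add: algebra_simps power2_eq_square power3_eq_cube)
  define a where "a = n - 8 * d"
  define t where "t = n - 1 - 2 * s"
  have "a \<ge> 0" "t \<ge> 0" using assms by (auto simp: a_def t_def)
  then have "0 \<le> 1/2*a^2 + 2*a*t + 9/2*a*d + 5/2*a + 1/2*t^2 + 35/2*t*d + 7/2*t + 2*d^2 + 35/2*d"
    using assms(1) by (intro add_nonneg_nonneg mult_nonneg_nonneg) auto
  moreover have "h (n + d) = -(1/2*a^2 + 2*a*t + 9/2*a*d + 5/2*a + 1/2*t^2 + 35/2*t*d + 7/2*t
      + 2*d^2 + 35/2*d + 3)"
  proof -
    have s: "s = (n - 1 - t) / 2" and n: "n = 8 * d + a" by (auto simp: a_def t_def)
    show ?thesis unfolding h_def s unfolding n by (simp add: field_simps power2_eq_square)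
  qed
  ultimately have h_start: "h (n + d) < 0" by linarith
  have "h x - h (n + d) = (x - (n + d)) * (5 * (s + d) - (x + n + d) - (2 * n + 1))"
    unfolding h_def by (simp add: algebra_simps power2_eq_square)
  also have "\<dots> \<le> 0" using assms by (intro mult_nonneg_nonpos) auto
  finally have "h x < 0" using h_start by linarith
  then have "(s - d) * h x < 0" using assms(2) by (simp add: mult_pos_neg)
  then show ?thesis using diff by linarith
qed

lemma lambda1_join_graph_gt:
  assumes "0 < s" "2 * s + 1 \<le> n" "real n \<le> a" "join_cubic (real n) (real s) a < 0"
  shows "a < lambda1 (dist_matrix n (join_graph n s))"
    and "join_cubic (real n) (real s) (lambda1 (dist_matrix n (join_graph n s))) = 0"
proof -
  have "a < 2 * real n"
    using join_cubic_pos_from_2n[of "real s" "real n" a] assms by fastforce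
  moreover have "0 < join_cubic (real n) (real s) (2 * real n)"
    using assms(1,2) by (intro join_cubic_pos_from_2n) auto
  moreover have "continuous_on {a..2 * real n} (join_cubic (real n) (real s))"
    unfolding join_cubic_def by (intro continuous_intros)
  ultimately obtain x where "a \<le> x" "x \<le> 2 * real n" "join_cubic (real n) (real s) x = 0"
    using IVT'[of "join_cubic (real n) (real s)" a 0 "2 * real n"] assms(4) by force
  moreover from this have "a \<noteq> x" using assms(4) by auto
  ultimately show "a < lambda1 (dist_matrix n (join_graph n s))"
    and "join_cubic (real n) (real s) (lambda1 (dist_matrix n (join_graph n s))) = 0"
    using lambda1_join_graph[OF assms(1,2)] assms(3) by auto
qed

theorem mainTheorem4:
  fixes \<delta> n :: nat
  assumes "\<delta> \<ge> 2" and "n \<ge> 8 * \<delta>"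
  shows "lambda1 (dist_matrix n (join_graph n \<delta>)) > real n + real \<delta> \<and>
    (\<forall>s::nat. \<delta> + 1 \<le> s \<and> real s \<le> (real n - 1) / 2 \<longrightarrow>
           lambda1 (dist_matrix n (join_graph n \<delta>)) < lambda1 (dist_matrix n (join_graph n s)))"
proof -
  define \<rho> where "\<rho> = lambda1 (dist_matrix n (join_graph n \<delta>))"
  have cubic_neg: "join_cubic (real n) (real \<delta>) (real n + real \<delta>) < 0"
    using assms by (intro join_cubic_at_n_plus_s_neg) auto
  have \<rho>_gt: "real n + real \<delta> < \<rho>" and \<rho>_root: "join_cubic (real n) (real \<delta>) \<rho> = 0"
    using lambda1_join_graph_gt[OF _ _ _ cubic_neg] assms unfolding \<rho>_def by auto
  have "\<rho> < lambda1 (dist_matrix n (join_graph n s))"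
    if s: "\<delta> + 1 \<le> s" "real s \<le> (real n - 1) / 2" for s
  proof (rule lambda1_join_graph_gt)
    show "join_cubic (real n) (real s) \<rho> < 0"
      using join_cubic_strict_antimono[of "real \<delta>" "real s" "real n" \<rho>] s assms \<rho>_gt \<rho>_root
      by auto
  qed (use s \<rho>_gt in auto)
  with \<rho>_gt show ?thesis unfolding \<rho>_def by blast
qed

end
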